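(* Let $R$ be a ring with identity, $(S,\leq)$ a strictly ordered monoid which is quasitotally ordered, and $\omega:S\to\mathrm{End}(R)$ a monoid homomorphism. Assume $R$ is $(S,\omega)$-Armendariz, and let $A=R[[S,\omega]]$. (1) If $A$ is a generalized right Baer ring, then $R$ is a generalized right Baer ring. (2) If moreover $R$ is $S$-compatible and $A$ is a generalized right quasi-Baer ring, then $R$ is a generalized right quasi-Baer ring.
   Context: All rings are associative with identity. For a nonempty subset $X$ of a ring $R$, $r_R(X)=\{a\in R : xa=0 \text{ for all } x\in X\}$ is its right annihilator, and for a positive integer $n$, $X^n$ denotes the set of all products $a_1a_2\cdots a_n$ with $a_i\in X$ for $1\le i\le n$. A ring $R$ is generalized right Baer if for every nonempty subset $X$ of $R$ there exist a positive integer $n$ (depending on $X$) and an idempotent $e\in R$ with $r_R(X^n)=eR$. A ring $R$ is generalized right quasi-Baer if for every right ideal $I$ of $R$ there exist a positive integer $n$ (depending on $I$) and an idempotent $e\in R$ with $r_R(I^n)=eR$. An ordered monoid $(S,\leq)$ is a monoid with a partial order such that $u\le v$ implies $ut\le vt$ and $tu\le tv$ for all $t\in S$; it is strictly ordered if $u<v$ implies $ut<vt$ and $tu<tv$ for all $t\in S$. It is quasitotally ordered if $\leq$ can be refined to an order $\preceq$ with respect to which $S$ is a strictly totally ordered monoid. A subset of $S$ is artinian if every strictly decreasing sequence in it is finite, and narrow if every subset of pairwise incomparable elements is finite. Given a ring $R$, a strictly ordered monoid $(S,\le)$ and a monoid homomorphism $\omega:S\to\mathrm{End}(R)$, $s\mapsto\omega_s$,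 the ring of skew generalized power series $R[[S,\omega]]$ is the set of all maps $f:S\to R$ whose support $\mathrm{supp}(f)=\{s\in S: f(s)\neq 0\}$ is artinian and narrow, with pointwise addition and multiplication $(fg)(s)=\sum_{(u,v)\in X_s(f,g)} f(u)\,\omega_u(g(v))$, where $X_s(f,g)=\{(u,v)\in S\times S: uv=s,\ f(u)\ne0,\ g(v)\ne0\}$ (a finite set; an empty sum is $0$). An endomorphism $\sigma$ of $R$ is compatible if for all $a,b\in R$: $ab=0 \iff a\sigma(b)=0$. $R$ is $S$-compatible if $\omega_s$ is compatible for every $s\in S$. $R$ is $(S,\omega)$-Armendariz if whenever $f,g\in R[[S,\omega]]$ satisfy $fg=0$, then $f(s)\,\omega_s(g(t))=0$ for all $s,t\in S$. *)

theory Defs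
  imports "HOL-Algebra.Ring" "HOL-Algebra.AbelCoset"
begin

definition r_ann :: "('b, 'c) ring_scheme \<Rightarrow> 'b set \<Rightarrow> 'b set" where
  "r_ann R X = {a \<in> carrier R. \<forall>x\<in>X. x \<otimes>\<^bsub>R\<^esub> a = \<zero>\<^bsub>R\<^esub>}"

fun set_pow :: "('b, 'c) ring_scheme \<Rightarrow> 'b set \<Rightarrow> nat \<Rightarrow> 'b set" where
  "set_pow R X 0 = {\<one>\<^bsub>R\<^esub>}"
| "set_pow R X (Suc 0) = X"
| "set_pow R X (Suc (Suc n)) = {p \<otimes>\<^bsub>R\<^esub> x | p x. p \<in> set_pow R X (Suc n) \<and> x \<in> X}"

definition right_ideal :: "'b set \<Rightarrow> ('b, 'c) ring_scheme \<Rightarrow> bool" where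
  "right_ideal I R \<longleftrightarrow> additive_subgroup I R \<and>
     (\<forall>x\<in>I. \<forall>r\<in>carrier R. x \<otimes>\<^bsub>R\<^esub> r \<in> I)"

definition gen_right_Baer :: "('b, 'c) ring_scheme \<Rightarrow> bool" where
  "gen_right_Baer R \<longleftrightarrow>
     (\<forall>X. X \<subseteq> carrier R \<and> X \<noteq> {} \<longrightarrow>
        (\<exists>n::nat. n \<ge> 1 \<and> (\<exists>e\<in>carrier R. e \<otimes>\<^bsub>R\<^esub> e = e \<and>
            r_ann R (set_pow R X n) = {e \<otimes>\<^bsub>R\<^esub> a | a. a \<in> carrier R})))"

definition gen_right_qBaer :: "('b, 'c) ring_scheme \<Rightarrow> bool" where
  "gen_right_qBaer R \<longleftrightarrow>
     (\<forall>I. right_ideal I R \<longrightarrow>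
        (\<exists>n::nat. n \<ge> 1 \<and> (\<exists>e\<in>carrier R. e \<otimes>\<^bsub>R\<^esub> e = e \<and>
            r_ann R (set_pow R I n) = {e \<otimes>\<^bsub>R\<^esub> a | a. a \<in> carrier R})))"

definition tc_ring :: "'a::ring_1 ring" where
  "tc_ring = \<lparr>carrier = UNIV, mult = (*), one = 1, zero = 0, add = (+)\<rparr>"

definition ordered_monoid :: "('m::monoid_mult \<Rightarrow> 'm \<Rightarrow> bool) \<Rightarrow> bool" where
  "ordered_monoid leq \<longleftrightarrow> partial_order_on UNIV {(u, v). leq u v} \<and>
     (\<forall>u v t. leq u v \<longrightarrow> leq (u * t) (v * t) \<and> leq (t * u) (t * v))"

definition strictly_ordered_monoid :: "('m::monoid_mult \<Rightarrow> 'm \<Rightarrow> bool) \<Rightarrow> bool" where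
  "strictly_ordered_monoid leq \<longleftrightarrow> ordered_monoid leq \<and>
     (\<forall>u v t. leq u v \<and> u \<noteq> v \<longrightarrow>
        (leq (u * t) (v * t) \<and> u * t \<noteq> v * t) \<and> (leq (t * u) (t * v) \<and> t * u \<noteq> t * v))"

definition quasitotally_ordered :: "('m::monoid_mult \<Rightarrow> 'm \<Rightarrow> bool) \<Rightarrow> bool" where
  "quasitotally_ordered leq \<longleftrightarrow>
     (\<exists>leq'. (\<forall>u v. leq u v \<longrightarrow> leq' u v) \<and> strictly_ordered_monoid leq' \<and>
            (\<forall>u v. leq' u v \<or> leq' v u))"

definition artinian_set :: "('m \<Rightarrow> 'm \<Rightarrow> bool) \<Rightarrow> 'm set \<Rightarrow> bool" where
  "artinian_set leq X \<longleftrightarrow>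
     \<not> (\<exists>f :: nat \<Rightarrow> 'm. (\<forall>i. f i \<in> X) \<and> (\<forall>i. leq (f (Suc i)) (f i) \<and> f (Suc i) \<noteq> f i))"

definition narrow_set :: "('m \<Rightarrow> 'm \<Rightarrow> bool) \<Rightarrow> 'm set \<Rightarrow> bool" where
  "narrow_set leq X \<longleftrightarrow>
     (\<forall>Y \<subseteq> X. (\<forall>x\<in>Y. \<forall>y\<in>Y. x \<noteq> y \<longrightarrow> \<not> leq x y \<and> \<not> leq y x) \<longrightarrow> finite Y)"

definition ring_endo :: "('a::ring_1 \<Rightarrow> 'a) \<Rightarrow> bool" where
  "ring_endo \<sigma> \<longleftrightarrow> (\<forall>a b. \<sigma> (a + b) = \<sigma> a + \<sigma> b \<and> \<sigma> (a * b) = \<sigma> a * \<sigma> b)"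

definition monoid_hom_End :: "('m::monoid_mult \<Rightarrow> 'a::ring_1 \<Rightarrow> 'a) \<Rightarrow> bool" where
  "monoid_hom_End \<omega> \<longleftrightarrow> (\<forall>s. ring_endo (\<omega> s)) \<and> \<omega> 1 = id \<and>
     (\<forall>s t. \<omega> (s * t) = \<omega> s \<circ> \<omega> t)"

definition supp :: "('m \<Rightarrow> 'a::zero) \<Rightarrow> 'm set" where
  "supp f = {s. f s \<noteq> 0}"

definition skew_gps :: "('m::monoid_mult \<Rightarrow> 'm \<Rightarrow> bool) \<Rightarrow> ('m \<Rightarrow> 'a::ring_1 \<Rightarrow> 'a)
    \<Rightarrow> ('m \<Rightarrow> 'a) ring" where
  "skew_gps leq \<omega> =
     \<lparr>carrier = {f. artinian_set leq (supp f) \<and> narrow_set leq (supp f)},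
      mult = (\<lambda>f g s. \<Sum>(u, v)\<in>{(u, v). u * v = s \<and> f u \<noteq> 0 \<and> g v \<noteq> 0}. f u * \<omega> u (g v)),
      one = (\<lambda>s. if s = 1 then 1 else 0),
      zero = (\<lambda>s. 0),
      add = (\<lambda>f g s. f s + g s)\<rparr>"

definition compatible_endo :: "('a::ring_1 \<Rightarrow> 'a) \<Rightarrow> bool" where
  "compatible_endo \<sigma> \<longleftrightarrow> (\<forall>a b. a * b = 0 \<longleftrightarrow> a * \<sigma> b = 0)"

definition S_compatible :: "('m \<Rightarrow> 'a::ring_1 \<Rightarrow> 'a) \<Rightarrow> bool" where
  "S_compatible \<omega> \<longleftrightarrow> (\<forall>s. compatible_endo (\<omega> s))"

definition S_omega_Armendariz :: "('m::monoid_mult \<Rightarrow> 'm \<Rightarrow> bool) \<Rightarrow> ('m \<Rightarrow> 'a::ring_1 \<Rightarrow> 'a) \<Rightarrow> bool" where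
  "S_omega_Armendariz leq \<omega> \<longleftrightarrow>
     (\<forall>f\<in>carrier (skew_gps leq \<omega>). \<forall>g\<in>carrier (skew_gps leq \<omega>).
        f \<otimes>\<^bsub>skew_gps leq \<omega>\<^esub> g = \<zero>\<^bsub>skew_gps leq \<omega>\<^esub> \<longrightarrow> (\<forall>s t. f s * \<omega> s (g t) = 0))"

end

theory Submission
  imports Defs "HOL-Library.Ramsey"
begin

text \<open>
  Constant series embed \<open>R\<close> into \<open>A = R[[S,\<omega>]]\<close>. Given \<open>X \<subseteq> R\<close> (resp. a right ideal
  \<open>I\<close> of \<open>R\<close>), the hypothesis on \<open>A\<close>, applied to the constant series of \<open>X\<close> (resp. to the
  right ideal \<open>I[[S,\<omega>]]\<close>), gives \<open>r\<^sub>A(Y\<^sup>n) = E A\<close> with \<open>E\<close> idempotent. Since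
  \<open>(E - 1) E = 0\<close>, the Armendariz condition yields \<open>(E(1) - 1) E(v) = 0\<close> for all \<open>v\<close>, so
  \<open>E(1)\<close> is a left unit on \<open>E A\<close>; comparing constant coefficients then gives
  \<open>r\<^sub>R(X\<^sup>n) = E(1) R\<close>. In the quasi-Baer case, compatibility of the \<open>\<omega>\<^sub>s\<close> is what makes
  every coefficient of an element of \<open>I[[S,\<omega>]]\<^sup>n\<close> annihilate \<open>b\<close> whenever \<open>I\<^sup>n b = 0\<close>.

  The products in \<open>A\<close> are finite sums, and distribute over differences, because in a strictly
  ordered monoid an element has only finitely many factorisations \<open>u v\<close> with \<open>u, v\<close> in given
  artinian narrow sets; for a partial order these are exactly the sets in which every sequence
  has an increasing subsequence (by Ramsey's theorem).
\<close>

section \<open>Ordered monoids and their artinian narrow subsets\<close>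

lemma ordered_monoid_refl: "ordered_monoid leq \<Longrightarrow> leq x x"
  unfolding ordered_monoid_def partial_order_on_def preorder_on_def refl_on_def by blast

lemma ordered_monoid_trans: "ordered_monoid leq \<Longrightarrow> leq x y \<Longrightarrow> leq y z \<Longrightarrow> leq x z"
  unfolding ordered_monoid_def partial_order_on_def preorder_on_def trans_def by blast

lemma ordered_monoid_antisym: "ordered_monoid leq \<Longrightarrow> leq x y \<Longrightarrow> leq y x \<Longrightarrow> x = y"
  unfolding ordered_monoid_def partial_order_on_def antisym_def by blast

lemma ordered_monoid_mult_mono:
  "ordered_monoid leq \<Longrightarrow> leq u u' \<Longrightarrow> leq v v' \<Longrightarrow> leq (u * v) (u' * v')"
  unfolding ordered_monoid_def partial_order_on_def preorder_on_def trans_def by blast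

lemma strictly_ordered_monoid_imp_ordered_monoid:
  "strictly_ordered_monoid leq \<Longrightarrow> ordered_monoid leq"
  unfolding strictly_ordered_monoid_def by blast

lemma strictly_ordered_monoid_cancel:
  assumes som: "strictly_ordered_monoid leq"
    and "leq u u'" "leq v v'" "u * v = u' * v'"
  shows "u = u' \<and> v = v'"
proof -
  have om: "ordered_monoid leq"
    using som by (rule strictly_ordered_monoid_imp_ordered_monoid)
  have uv: "leq (u * v) (u' * v)" and u'v: "leq (u' * v) (u' * v')"
    using assms(2,3) om unfolding ordered_monoid_def by blast+
  have "u * v = u' * v" "u' * v = u' * v'"
    using ordered_monoid_antisym[OF om] ordered_monoid_trans[OF om] uv u'v assms(4) by metis+
  then show ?thesis
    using som assms(2,3) unfolding strictly_ordered_monoid_def by metis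
qed

lemma monochromatic_subsequence:
  fixes c :: "nat \<Rightarrow> nat \<Rightarrow> nat"
  assumes "\<And>i j. c i j < k"
  obtains h :: "nat \<Rightarrow> nat" and t where "strict_mono h" and "\<And>i j. i < j \<Longrightarrow> c (h i) (h j) = t"
proof -
  have "\<forall>x\<in>(UNIV :: nat set). \<forall>y\<in>UNIV. x \<noteq> y \<longrightarrow> c (Min {x, y}) (Max {x, y}) < k"
    using assms by blast
  from Ramsey2[OF infinite_UNIV_nat this] obtain Y t where "infinite Y"
    and Y: "\<forall>x\<in>Y. \<forall>y\<in>Y. x \<noteq> y \<longrightarrow> c (Min {x, y}) (Max {x, y}) = t"
    by blast
  define h where "h = enumerate Y"
  have "strict_mono h"
    unfolding h_def using \<open>infinite Y\<close> by (simp add: strict_mono_def)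
  moreover have "c (h i) (h j) = t" if "i < j" for i j
  proof -
    have "h i < h j" "h i \<in> Y" "h j \<in> Y"
      using \<open>infinite Y\<close> that by (simp_all add: h_def enumerate_in_set)
    then show ?thesis using Y[rule_format, of "h i" "h j"] by (simp add: min_def max_def)
  qed
  ultimately show thesis by (rule that)
qed

definition increasing_subseq :: "('m \<Rightarrow> 'm \<Rightarrow> bool) \<Rightarrow> (nat \<Rightarrow> 'm) \<Rightarrow> bool" where
  "increasing_subseq leq a \<longleftrightarrow>
     (\<exists>h::nat \<Rightarrow> nat. strict_mono h \<and> (\<forall>i j. i < j \<longrightarrow> leq (a (h i)) (a (h j))))"

definition wpo_set :: "('m \<Rightarrow> 'm \<Rightarrow> bool) \<Rightarrow> 'm set \<Rightarrow> bool" where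
  "wpo_set leq X \<longleftrightarrow> (\<forall>a. range a \<subseteq> X \<longrightarrow> increasing_subseq leq a)"

lemma increasing_subseq_comp:
  assumes "strict_mono g" and "increasing_subseq leq (a \<circ> g)"
  shows "increasing_subseq leq a"
proof -
  from assms(2) obtain h :: "nat \<Rightarrow> nat" where "strict_mono h"
    and h: "\<forall>i j. i < j \<longrightarrow> leq (a (g (h i))) (a (g (h j)))"
    unfolding increasing_subseq_def by auto
  have "strict_mono (g \<circ> h)"
    using assms(1) \<open>strict_mono h\<close> by (simp add: strict_mono_def)
  with h show ?thesis
    unfolding increasing_subseq_def by (intro exI[of _ "g \<circ> h"]) simp
qed

lemma wpo_set_imp_artinian:
  assumes om: "ordered_monoid leq" and "wpo_set leq X"
  shows "artinian_set leq X"
  unfolding artinian_set_def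
proof
  assume "\<exists>f. (\<forall>i. f i \<in> X) \<and> (\<forall>i. leq (f (Suc i)) (f i) \<and> f (Suc i) \<noteq> f i)"
  then obtain f where "range f \<subseteq> X" and desc: "\<And>i. leq (f (Suc i)) (f i) \<and> f (Suc i) \<noteq> f i"
    by blast
  then obtain h :: "nat \<Rightarrow> nat" where "strict_mono h" and h: "leq (f (h 0)) (f (h 1))"
    using assms(2) unfolding wpo_set_def increasing_subseq_def by blast
  have "leq (f j) (f i)" if "i \<le> j" for i j
    using that
  proof (induction j rule: dec_induct)
    case base show ?case using ordered_monoid_refl[OF om] .
  next
    case (step j)
    then show ?case using desc[of j] ordered_monoid_trans[OF om, of "f (Suc j)" "f j" "f i"] by blast
  qed
  then have "leq (f (h 1)) (f (Suc (h 0)))"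
    using \<open>strict_mono h\<close> by (simp add: Suc_leI strict_mono_less)
  then have "leq (f (h 0)) (f (Suc (h 0)))"
    using h ordered_monoid_trans[OF om] by blast
  then show False
    using desc[of "h 0"] ordered_monoid_antisym[OF om] by blast
qed

lemma wpo_set_imp_narrow:
  assumes "wpo_set leq X"
  shows "narrow_set leq X"
  unfolding narrow_set_def
proof (intro allI impI)
  fix Y assume "Y \<subseteq> X" and antichain: "\<forall>x\<in>Y. \<forall>y\<in>Y. x \<noteq> y \<longrightarrow> \<not> leq x y \<and> \<not> leq y x"
  show "finite Y"
  proof (rule ccontr)
    assume "infinite Y"
    then obtain f :: "nat \<Rightarrow> _" where "inj f" "range f \<subseteq> Y"
      using infinite_countable_subset by blast
    then have "increasing_subseq leq f"
      using assms \<open>Y \<subseteq> X\<close> unfolding wpo_set_def by blast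
    then obtain h :: "nat \<Rightarrow> nat" where "strict_mono h" and "leq (f (h 0)) (f (h 1))"
      unfolding increasing_subseq_def by auto
    moreover have "f (h 0) \<noteq> f (h 1)"
      using \<open>inj f\<close> strict_mono_less[OF \<open>strict_mono h\<close>, of 0 1] by (auto dest: injD)
    ultimately show False
      using antichain \<open>range f \<subseteq> Y\<close> by blast
  qed
qed

lemma narrow_set_no_infinite_antichain:
  fixes a :: "nat \<Rightarrow> 'm"
  assumes refl: "\<And>x. leq x x" and na: "narrow_set leq X" and "range a \<subseteq> X"
    and incomparable: "\<And>i j. i \<noteq> j \<Longrightarrow> \<not> leq (a i) (a j)"
  shows False
proof -
  have "inj a"
  proof (rule injI)
    fix i j assume "a i = a j"
    then show "i = j"
      using incomparable[of i j] refl[of "a i"] by auto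
  qed
  then have "infinite (range a)"
    by (rule range_inj_infinite)
  moreover have "\<forall>x\<in>range a. \<forall>y\<in>range a. x \<noteq> y \<longrightarrow> \<not> leq x y \<and> \<not> leq y x"
  proof (clarsimp)
    fix i j assume "a i \<noteq> a j"
    then show "\<not> leq (a i) (a j) \<and> \<not> leq (a j) (a i)"
      using incomparable[of i j] incomparable[of j i] by auto
  qed
  ultimately show False
    using na \<open>range a \<subseteq> X\<close> unfolding narrow_set_def by blast
qed

lemma artinian_narrow_imp_wpo_set:
  assumes om: "ordered_monoid leq" and ar: "artinian_set leq X" and na: "narrow_set leq X"
  shows "wpo_set leq X"
  unfolding wpo_set_def
proof (intro allI impI)
  fix a :: "nat \<Rightarrow> _" assume aX: "range a \<subseteq> X"
  define c where "c i j = (if leq (a i) (a j) then 0 else if leq (a j) (a i) then 1 else 2::nat)" for i j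
  have c_bound: "\<And>i j. c i j < 3" by (simp add: c_def)
  obtain h :: "nat \<Rightarrow> nat" and t where h: "strict_mono h" and ht: "\<And>i j. i < j \<Longrightarrow> c (h i) (h j) = t"
    using monochromatic_subsequence[of c 3, OF c_bound] by blast
  consider "t = 0" | "t = 1" | "t = 2"
    using ht[of 0 1] unfolding c_def by (auto split: if_splits)
  then show "increasing_subseq leq a"
  proof cases
    case 1
    then have "\<forall>i j. i < j \<longrightarrow> leq (a (h i)) (a (h j))"
      using ht unfolding c_def by (metis zero_neq_one zero_neq_numeral)
    with h show ?thesis
      unfolding increasing_subseq_def by blast
  next
    case 2
    have "leq (a (h (Suc i))) (a (h i)) \<and> a (h (Suc i)) \<noteq> a (h i)" for i
    proof -
      have "c (h i) (h (Suc i)) = 1" using ht[of i "Suc i"] 2 by simp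
      then have "\<not> leq (a (h i)) (a (h (Suc i)))" "leq (a (h (Suc i))) (a (h i))"
        unfolding c_def by (simp_all split: if_splits)
      then show ?thesis using ordered_monoid_refl[OF om, of "a (h i)"] by auto
    qed
    then have "\<exists>f. (\<forall>i. f i \<in> X) \<and> (\<forall>i. leq (f (Suc i)) (f i) \<and> f (Suc i) \<noteq> f i)"
      using aX by (intro exI[of _ "a \<circ> h"]) auto
    with ar show ?thesis
      unfolding artinian_set_def by simp
  next
    case 3
    have "range (a \<circ> h) \<subseteq> X"
      using aX by auto
    moreover have "\<not> leq ((a \<circ> h) i) ((a \<circ> h) j)" if "i \<noteq> j" for i j
      using ht[of i j] ht[of j i] that 3 unfolding c_def
      by (cases "i < j") (auto split: if_splits)
    ultimately have False
      by (rule narrow_set_no_infinite_antichain[OF ordered_monoid_refl[OF om] na])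
    then show ?thesis ..
  qed
qed

lemma wpo_set_subset: "wpo_set leq X \<Longrightarrow> Y \<subseteq> X \<Longrightarrow> wpo_set leq Y"
  unfolding wpo_set_def by blast

lemma wpo_set_singleton:
  assumes "leq x x"
  shows "wpo_set leq {x}"
  unfolding wpo_set_def increasing_subseq_def
proof (intro allI impI)
  fix a :: "nat \<Rightarrow> _" assume "range a \<subseteq> {x}"
  then have "\<forall>i j. i < j \<longrightarrow> leq (a (id i)) (a (id j))"
    using assms by (auto simp: image_subset_iff)
  then show "\<exists>h::nat \<Rightarrow> nat. strict_mono h \<and> (\<forall>i j. i < j \<longrightarrow> leq (a (h i)) (a (h j)))"
    by (metis strict_mono_def id_apply)
qed

lemma increasing_subseq_if_infinitely_often:
  assumes "wpo_set leq X" and "infinite {i. a i \<in> X}"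
  shows "increasing_subseq leq a"
proof -
  obtain g :: "nat \<Rightarrow> nat" where "strict_mono g" and "\<forall>n. g n \<in> {i. a i \<in> X}"
    using infinite_enumerate[OF assms(2)] by blast
  then have "range (a \<circ> g) \<subseteq> X" by auto
  then have "increasing_subseq leq (a \<circ> g)"
    using assms(1) unfolding wpo_set_def by blast
  with \<open>strict_mono g\<close> show ?thesis
    by (rule increasing_subseq_comp)
qed

lemma wpo_set_Un:
  assumes "wpo_set leq X" and "wpo_set leq Y"
  shows "wpo_set leq (X \<union> Y)"
  unfolding wpo_set_def
proof (intro allI impI)
  fix a :: "nat \<Rightarrow> _" assume "range a \<subseteq> X \<union> Y"
  then have "{i. a i \<in> X} \<union> {i. a i \<in> Y} = UNIV" by blast
  then have "infinite {i. a i \<in> X} \<or> infinite {i. a i \<in> Y}"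
    by (metis finite_UnI infinite_UNIV_nat)
  then show "increasing_subseq leq a"
    using increasing_subseq_if_infinitely_often assms by blast
qed

lemma wpo_set_Times:
  assumes X: "wpo_set r X" and Y: "wpo_set r' Y"
  shows "wpo_set (\<lambda>p q. r (fst p) (fst q) \<and> r' (snd p) (snd q)) (X \<times> Y)"
  unfolding wpo_set_def
proof (intro allI impI)
  fix p :: "nat \<Rightarrow> _" assume p: "range p \<subseteq> X \<times> Y"
  then have "increasing_subseq r (fst \<circ> p)"
    using X unfolding wpo_set_def by (auto simp: image_subset_iff mem_Times_iff)
  then obtain g :: "nat \<Rightarrow> nat" where g: "strict_mono g"
    and fst_incr: "\<forall>i j. i < j \<longrightarrow> r (fst (p (g i))) (fst (p (g j)))"
    unfolding increasing_subseq_def by auto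
  have "range (snd \<circ> p \<circ> g) \<subseteq> Y" using p by (auto simp: image_subset_iff mem_Times_iff)
  then have "increasing_subseq r' (snd \<circ> p \<circ> g)"
    using Y unfolding wpo_set_def by blast
  then obtain h :: "nat \<Rightarrow> nat" where h: "strict_mono h"
    and snd_incr: "\<forall>i j. i < j \<longrightarrow> r' (snd (p (g (h i)))) (snd (p (g (h j))))"
    unfolding increasing_subseq_def by auto
  have "strict_mono (g \<circ> h)"
    using g h by (simp add: strict_mono_def)
  moreover have "\<forall>i j. i < j \<longrightarrow> r (fst (p (g (h i)))) (fst (p (g (h j))))"
    using fst_incr strict_monoD[OF h] by blast
  ultimately show "increasing_subseq (\<lambda>p q. r (fst p) (fst q) \<and> r' (snd p) (snd q)) p"
    using snd_incr unfolding increasing_subseq_def by (intro exI[of _ "g \<circ> h"]) auto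
qed

lemma wpo_set_image:
  assumes "wpo_set r X"
    and mono: "\<And>x y. x \<in> X \<Longrightarrow> y \<in> X \<Longrightarrow> r x y \<Longrightarrow> leq (f x) (f y)"
  shows "wpo_set leq (f ` X)"
  unfolding wpo_set_def
proof (intro allI impI)
  fix a :: "nat \<Rightarrow> _" assume "range a \<subseteq> f ` X"
  then have "\<forall>i. \<exists>x. x \<in> X \<and> a i = f x" by blast
  from choice[OF this] obtain b where b: "\<forall>i. b i \<in> X \<and> a i = f (b i)"
    by blast
  then have "increasing_subseq r b"
    using assms(1) unfolding wpo_set_def by blast
  then obtain h :: "nat \<Rightarrow> nat" where "strict_mono h"
    and incr: "\<forall>i j. i < j \<longrightarrow> r (b (h i)) (b (h j))"
    unfolding increasing_subseq_def by auto
  have "\<forall>i j. i < j \<longrightarrow> leq (a (h i)) (a (h j))"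
    using incr b mono by simp
  with \<open>strict_mono h\<close> show "increasing_subseq leq a"
    unfolding increasing_subseq_def by (intro exI[of _ h]) simp
qed

lemma wpo_set_times:
  assumes om: "ordered_monoid leq" and X: "wpo_set leq X" and Y: "wpo_set leq Y"
  shows "wpo_set leq {x * y | x y. x \<in> X \<and> y \<in> Y}"
proof -
  have "{x * y | x y. x \<in> X \<and> y \<in> Y} = (\<lambda>p. fst p * snd p) ` (X \<times> Y)"
    by force
  moreover have "wpo_set leq ((\<lambda>p. fst p * snd p) ` (X \<times> Y))"
    by (rule wpo_set_image[OF wpo_set_Times[OF X Y]]) (auto intro: ordered_monoid_mult_mono[OF om])
  ultimately show ?thesis by simp
qed

lemma finite_factorizations:
  assumes som: "strictly_ordered_monoid leq" and X: "wpo_set leq X" and Y: "wpo_set leq Y"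
  shows "finite {(u, v). u * v = s \<and> u \<in> X \<and> v \<in> Y}"
proof (rule ccontr)
  assume "infinite {(u, v). u * v = s \<and> u \<in> X \<and> v \<in> Y}"
  then obtain p :: "nat \<Rightarrow> _" where "inj p" and p: "range p \<subseteq> {(u, v). u * v = s \<and> u \<in> X \<and> v \<in> Y}"
    using infinite_countable_subset by blast
  then have "range p \<subseteq> X \<times> Y" by auto
  then have "increasing_subseq (\<lambda>p q. leq (fst p) (fst q) \<and> leq (snd p) (snd q)) p"
    using wpo_set_Times[OF X Y] unfolding wpo_set_def by blast
  then obtain h :: "nat \<Rightarrow> nat" where "strict_mono h"
    and le: "leq (fst (p (h 0))) (fst (p (h 1)))" "leq (snd (p (h 0))) (snd (p (h 1)))"
    unfolding increasing_subseq_def by auto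
  have "fst (p (h 0)) * snd (p (h 0)) = fst (p (h 1)) * snd (p (h 1))"
    using p by (auto simp: image_subset_iff split_beta)
  then have "p (h 0) = p (h 1)"
    using strictly_ordered_monoid_cancel[OF som le] by (simp add: prod_eq_iff)
  moreover have "h 0 \<noteq> h 1"
    using strict_mono_less[OF \<open>strict_mono h\<close>, of 0 1] by simp
  ultimately show False
    using \<open>inj p\<close> by (simp add: inj_eq)
qed

section \<open>Skew generalized power series\<close>

lemma skew_gps_carrier_iff:
  "ordered_monoid leq \<Longrightarrow> f \<in> carrier (skew_gps leq \<omega>) \<longleftrightarrow> wpo_set leq (supp f)"
  unfolding skew_gps_def
  using wpo_set_imp_artinian wpo_set_imp_narrow artinian_narrow_imp_wpo_set by auto

lemma skew_gps_mult:
  "f \<otimes>\<^bsub>skew_gps leq \<omega>\<^esub> g =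
     (\<lambda>s. \<Sum>(u, v)\<in>{(u, v). u * v = s \<and> f u \<noteq> 0 \<and> g v \<noteq> 0}. f u * \<omega> u (g v))"
  unfolding skew_gps_def by simp

lemma skew_gps_zero: "\<zero>\<^bsub>skew_gps leq \<omega>\<^esub> = (\<lambda>s. 0)"
  unfolding skew_gps_def by simp

lemma skew_gps_add: "f \<oplus>\<^bsub>skew_gps leq \<omega>\<^esub> g = (\<lambda>s. f s + g s)"
  unfolding skew_gps_def by simp

lemma monoid_hom_End_one_apply: "monoid_hom_End \<omega> \<Longrightarrow> \<omega> 1 x = x"
  unfolding monoid_hom_End_def by simp

lemma monoid_hom_End_mult: "monoid_hom_End \<omega> \<Longrightarrow> \<omega> s (x * y) = \<omega> s x * \<omega> s y"
  unfolding monoid_hom_End_def ring_endo_def by blast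

lemma monoid_hom_End_zero: "monoid_hom_End \<omega> \<Longrightarrow> \<omega> s 0 = 0"
  unfolding monoid_hom_End_def ring_endo_def by (metis add_cancel_right_right add_0)

definition const_series :: "'a::ring_1 \<Rightarrow> 'm::monoid_mult \<Rightarrow> 'a" where
  "const_series a = (\<lambda>s. if s = 1 then a else 0)"

lemma const_series_carrier:
  "ordered_monoid leq \<Longrightarrow> const_series a \<in> carrier (skew_gps leq \<omega>)"
proof -
  assume om: "ordered_monoid leq"
  have "supp (const_series a) \<subseteq> {1}"
    unfolding supp_def const_series_def by auto
  then have "wpo_set leq (supp (const_series a))"
    by (rule wpo_set_subset[OF wpo_set_singleton[of leq 1, OF ordered_monoid_refl[OF om]]])
  then show ?thesis
    using skew_gps_carrier_iff[OF om] by blast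
qed

lemma const_series_mult:
  assumes "monoid_hom_End \<omega>"
  shows "const_series a \<otimes>\<^bsub>skew_gps leq \<omega>\<^esub> g = (\<lambda>s. a * g s)"
proof
  fix s
  have supp_pairs: "{(u, v). u * v = s \<and> const_series a u \<noteq> 0 \<and> g v \<noteq> 0} =
      (if a \<noteq> 0 \<and> g s \<noteq> 0 then {(1, s)} else {})"
    unfolding const_series_def by (auto split: if_splits)
  show "(const_series a \<otimes>\<^bsub>skew_gps leq \<omega>\<^esub> g) s = a * g s"
    unfolding skew_gps_mult supp_pairs
    by (auto simp: const_series_def monoid_hom_End_one_apply[OF assms])
qed

lemma mult_const_series:
  assumes "monoid_hom_End \<omega>"
  shows "f \<otimes>\<^bsub>skew_gps leq \<omega>\<^esub> const_series b = (\<lambda>s. f s * \<omega> s b)"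
proof
  fix s
  have supp_pairs: "{(u, v). u * v = s \<and> f u \<noteq> 0 \<and> const_series b v \<noteq> 0} =
      (if f s \<noteq> 0 \<and> b \<noteq> 0 then {(s, 1)} else {})"
    unfolding const_series_def by auto
  show "(f \<otimes>\<^bsub>skew_gps leq \<omega>\<^esub> const_series b) s = f s * \<omega> s b"
    unfolding skew_gps_mult supp_pairs
    by (auto simp: const_series_def monoid_hom_End_zero[OF assms])
qed

lemma const_series_mult_const_series:
  "monoid_hom_End \<omega> \<Longrightarrow>
     const_series a \<otimes>\<^bsub>skew_gps leq \<omega>\<^esub> const_series b = const_series (a * b)"
  by (simp add: const_series_mult) (auto simp: const_series_def)

lemma skew_gps_mult_closed:
  assumes som: "strictly_ordered_monoid leq"
    and f: "f \<in> carrier (skew_gps leq \<omega>)" and g: "g \<in> carrier (skew_gps leq \<omega>)"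
  shows "f \<otimes>\<^bsub>skew_gps leq \<omega>\<^esub> g \<in> carrier (skew_gps leq \<omega>)"
proof -
  have om: "ordered_monoid leq"
    using som by (rule strictly_ordered_monoid_imp_ordered_monoid)
  have "supp (f \<otimes>\<^bsub>skew_gps leq \<omega>\<^esub> g) \<subseteq> {x * y | x y. x \<in> supp f \<and> y \<in> supp g}"
  proof
    fix s assume "s \<in> supp (f \<otimes>\<^bsub>skew_gps leq \<omega>\<^esub> g)"
    then have "{(u, v). u * v = s \<and> f u \<noteq> 0 \<and> g v \<noteq> 0} \<noteq> {}"
      unfolding supp_def skew_gps_mult by force
    then show "s \<in> {x * y | x y. x \<in> supp f \<and> y \<in> supp g}"
      unfolding supp_def by blast
  qed
  moreover have "wpo_set leq {x * y | x y. x \<in> supp f \<and> y \<in> supp g}"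
    using wpo_set_times[OF om] f g skew_gps_carrier_iff[OF om] by blast
  ultimately show ?thesis
    using wpo_set_subset skew_gps_carrier_iff[OF om] by blast
qed

lemma skew_gps_carrier_supp_subset:
  assumes om: "ordered_monoid leq"
    and "f \<in> carrier (skew_gps leq \<omega>)" "g \<in> carrier (skew_gps leq \<omega>)"
    and "supp h \<subseteq> supp f \<union> supp g"
  shows "h \<in> carrier (skew_gps leq \<omega>)"
  using assms wpo_set_subset[OF wpo_set_Un] skew_gps_carrier_iff[OF om] by metis

lemma skew_gps_mult_eq_sum:
  assumes hom: "monoid_hom_End \<omega>" and "finite T"
    and "{(u, v). u * v = s \<and> f u \<noteq> 0 \<and> g v \<noteq> 0} \<subseteq> T" and "\<forall>(u, v)\<in>T. u * v = s"
  shows "(f \<otimes>\<^bsub>skew_gps leq \<omega>\<^esub> g) s = (\<Sum>(u, v)\<in>T. f u * \<omega> u (g v))"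
  unfolding skew_gps_mult
  by (rule sum.mono_neutral_left[OF assms(2,3)])
    (use assms(4) in \<open>auto simp: monoid_hom_End_zero[OF hom]\<close>)

lemma skew_gps_diff_mult:
  assumes som: "strictly_ordered_monoid leq" and hom: "monoid_hom_End \<omega>"
    and f: "f \<in> carrier (skew_gps leq \<omega>)" and g: "g \<in> carrier (skew_gps leq \<omega>)"
    and h: "h \<in> carrier (skew_gps leq \<omega>)"
  shows "(\<lambda>s. f s - g s) \<otimes>\<^bsub>skew_gps leq \<omega>\<^esub> h =
    (\<lambda>s. (f \<otimes>\<^bsub>skew_gps leq \<omega>\<^esub> h) s - (g \<otimes>\<^bsub>skew_gps leq \<omega>\<^esub> h) s)"
proof
  fix s
  have om: "ordered_monoid leq"
    using som by (rule strictly_ordered_monoid_imp_ordered_monoid)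
  define T where "T = {(u, v). u * v = s \<and> u \<in> supp f \<union> supp g \<and> v \<in> supp h}"
  have "finite T"
    unfolding T_def using f g h skew_gps_carrier_iff[OF om]
    by (blast intro: finite_factorizations[OF som] wpo_set_Un)
  have sum_T: "(F \<otimes>\<^bsub>skew_gps leq \<omega>\<^esub> h) s = (\<Sum>(u, v)\<in>T. F u * \<omega> u (h v))"
    if "supp F \<subseteq> supp f \<union> supp g" for F
    using that by (intro skew_gps_mult_eq_sum[OF hom \<open>finite T\<close>]) (auto simp: T_def supp_def)
  have "((\<lambda>s. f s - g s) \<otimes>\<^bsub>skew_gps leq \<omega>\<^esub> h) s = (\<Sum>(u, v)\<in>T. (f u - g u) * \<omega> u (h v))"
    by (rule sum_T) (auto simp: supp_def)
  also have "\<dots> = (\<Sum>(u, v)\<in>T. f u * \<omega> u (h v)) - (\<Sum>(u, v)\<in>T. g u * \<omega> u (h v))"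
    by (simp add: left_diff_distrib split_beta sum_subtractf)
  also have "\<dots> = (f \<otimes>\<^bsub>skew_gps leq \<omega>\<^esub> h) s - (g \<otimes>\<^bsub>skew_gps leq \<omega>\<^esub> h) s"
    by (simp add: sum_T)
  finally show "((\<lambda>s. f s - g s) \<otimes>\<^bsub>skew_gps leq \<omega>\<^esub> h) s =
      (f \<otimes>\<^bsub>skew_gps leq \<omega>\<^esub> h) s - (g \<otimes>\<^bsub>skew_gps leq \<omega>\<^esub> h) s" .
qed

section \<open>From the series ring to the coefficient ring\<close>

lemma idempotent_coeff_one_left_unit:
  assumes som: "strictly_ordered_monoid leq" and hom: "monoid_hom_End \<omega>"
    and arm: "S_omega_Armendariz leq \<omega>"
    and E: "E \<in> carrier (skew_gps leq \<omega>)" and EE: "E \<otimes>\<^bsub>skew_gps leq \<omega>\<^esub> E = E"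
  shows "E 1 * E v = E v"
proof -
  have om: "ordered_monoid leq"
    using som by (rule strictly_ordered_monoid_imp_ordered_monoid)
  have one: "const_series 1 \<in> carrier (skew_gps leq \<omega>)"
    by (rule const_series_carrier[OF om])
  define F where "F = (\<lambda>s. E s - const_series 1 s)"
  have "F \<in> carrier (skew_gps leq \<omega>)"
    by (rule skew_gps_carrier_supp_subset[OF om E one]) (auto simp: F_def supp_def)
  moreover have "F \<otimes>\<^bsub>skew_gps leq \<omega>\<^esub> E = \<zero>\<^bsub>skew_gps leq \<omega>\<^esub>"
    unfolding F_def skew_gps_diff_mult[OF som hom E one E] EE const_series_mult[OF hom]
    by (simp add: skew_gps_zero)
  ultimately have "F 1 * \<omega> 1 (E v) = 0"
    using arm E unfolding S_omega_Armendariz_def by blast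
  then show ?thesis
    by (simp add: F_def const_series_def monoid_hom_End_one_apply[OF hom] algebra_simps)
qed

lemma idempotent_coeff_one_mult_left:
  assumes som: "strictly_ordered_monoid leq" and hom: "monoid_hom_End \<omega>"
    and arm: "S_omega_Armendariz leq \<omega>"
    and E: "E \<in> carrier (skew_gps leq \<omega>)" and EE: "E \<otimes>\<^bsub>skew_gps leq \<omega>\<^esub> E = E"
  shows "E 1 * (E \<otimes>\<^bsub>skew_gps leq \<omega>\<^esub> h) s = (E \<otimes>\<^bsub>skew_gps leq \<omega>\<^esub> h) s"
  using idempotent_coeff_one_left_unit[OF assms]
  by (simp add: skew_gps_mult sum_distrib_left split_beta mult.assoc[symmetric])

lemma tc_ring_simps [simp]:
  "carrier tc_ring = UNIV" "x \<otimes>\<^bsub>tc_ring\<^esub> y = x * y" "\<zero>\<^bsub>tc_ring\<^esub> = 0"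
  "\<one>\<^bsub>tc_ring\<^esub> = 1" "x \<oplus>\<^bsub>tc_ring\<^esub> y = x + y"
  unfolding tc_ring_def by simp_all

lemma r_ann_tc_ring: "r_ann (tc_ring :: 'a::ring_1 ring) P = {a. \<forall>x\<in>P. x * a = 0}"
  unfolding r_ann_def by simp

definition r_ann_idempotent_generated :: "('b, 'c) ring_scheme \<Rightarrow> 'b set \<Rightarrow> bool" where
  "r_ann_idempotent_generated R Y \<longleftrightarrow>
     (\<exists>e\<in>carrier R. e \<otimes>\<^bsub>R\<^esub> e = e \<and> r_ann R Y = {e \<otimes>\<^bsub>R\<^esub> a | a. a \<in> carrier R})"

lemma gen_right_Baer_iff:
  "gen_right_Baer R \<longleftrightarrow> (\<forall>X. X \<subseteq> carrier R \<and> X \<noteq> {} \<longrightarrow>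
     (\<exists>n\<ge>1. r_ann_idempotent_generated R (set_pow R X n)))"
  unfolding gen_right_Baer_def r_ann_idempotent_generated_def by simp

lemma gen_right_qBaer_iff:
  "gen_right_qBaer R \<longleftrightarrow> (\<forall>I. right_ideal I R \<longrightarrow>
     (\<exists>n\<ge>1. r_ann_idempotent_generated R (set_pow R I n)))"
  unfolding gen_right_qBaer_def r_ann_idempotent_generated_def by simp

lemma const_series_set_pow:
  assumes hom: "monoid_hom_End \<omega>" and X: "\<And>a. a \<in> X \<Longrightarrow> const_series a \<in> Z"
  shows "p \<in> set_pow (tc_ring :: 'a::ring_1 ring) X (Suc n) \<Longrightarrow>
    const_series p \<in> set_pow (skew_gps leq \<omega>) Z (Suc n)"
proof (induction n arbitrary: p)
  case 0
  then show ?case using X by simp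
next
  case (Suc n)
  then obtain q x where "q \<in> set_pow tc_ring X (Suc n)" "x \<in> X" "p = q * x"
    by auto
  moreover have "const_series (q * x) = const_series q \<otimes>\<^bsub>skew_gps leq \<omega>\<^esub> const_series x"
    using const_series_mult_const_series[OF hom] by simp
  ultimately show ?case
    using Suc.IH X by auto
qed

lemma set_pow_const_series_image:
  assumes hom: "monoid_hom_End \<omega>"
  shows "F \<in> set_pow (skew_gps leq \<omega>) (const_series ` X) (Suc n) \<Longrightarrow>
    \<exists>p\<in>set_pow (tc_ring :: 'a::ring_1 ring) X (Suc n). F = const_series p"
proof (induction n arbitrary: F)
  case 0
  then show ?case by auto
next
  case (Suc n)
  then obtain G x where G: "G \<in> set_pow (skew_gps leq \<omega>) (const_series ` X) (Suc n)"
    and "x \<in> X" and F: "F = G \<otimes>\<^bsub>skew_gps leq \<omega>\<^esub> const_series x"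
    by auto
  obtain q where "q \<in> set_pow (tc_ring :: 'a ring) X (Suc n)" and "G = const_series q"
    using Suc.IH G by blast
  then have "F = const_series (q * x)" and "q * x \<in> set_pow (tc_ring :: 'a ring) X (Suc (Suc n))"
    using F \<open>x \<in> X\<close> const_series_mult_const_series[OF hom] by auto
  then show ?case by blast
qed

text \<open>The idempotent generating an annihilator in the coefficient ring is the constant
  coefficient \<open>E 1\<close> of the idempotent \<open>E\<close> in the series ring.\<close>
lemma r_ann_idempotent_generated_coeff_ring:
  fixes leq :: "'m::monoid_mult \<Rightarrow> 'm \<Rightarrow> bool" and \<omega> :: "'m \<Rightarrow> 'a::ring_1 \<Rightarrow> 'a"
  assumes som: "strictly_ordered_monoid leq" and hom: "monoid_hom_End \<omega>"
    and arm: "S_omega_Armendariz leq \<omega>"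
    and Y: "r_ann_idempotent_generated (skew_gps leq \<omega>) Y"
    and const_in: "\<And>p. p \<in> P \<Longrightarrow> const_series p \<in> Y"
    and const_ann: "\<And>b. \<forall>p\<in>P. p * b = 0 \<Longrightarrow> const_series b \<in> r_ann (skew_gps leq \<omega>) Y"
  shows "r_ann_idempotent_generated (tc_ring :: 'a ring) P"
proof -
  obtain E where E: "E \<in> carrier (skew_gps leq \<omega>)" and EE: "E \<otimes>\<^bsub>skew_gps leq \<omega>\<^esub> E = E"
    and ann: "r_ann (skew_gps leq \<omega>) Y = {E \<otimes>\<^bsub>skew_gps leq \<omega>\<^esub> a | a. a \<in> carrier (skew_gps leq \<omega>)}"
    using Y unfolding r_ann_idempotent_generated_def by blast
  have unit: "E 1 * b = b" if b: "\<forall>p\<in>P. p * b = 0" for b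
  proof -
    obtain a where "const_series b = E \<otimes>\<^bsub>skew_gps leq \<omega>\<^esub> a"
      using const_ann[OF b] ann by blast
    then have "b = (E \<otimes>\<^bsub>skew_gps leq \<omega>\<^esub> a) 1"
      using fun_cong[of _ _ 1] by (fastforce simp: const_series_def)
    then show ?thesis
      using idempotent_coeff_one_mult_left[OF som hom arm E EE] by simp
  qed
  have kill: "p * E 1 = 0" if "p \<in> P" for p
  proof -
    have "E \<in> {E \<otimes>\<^bsub>skew_gps leq \<omega>\<^esub> a | a. a \<in> carrier (skew_gps leq \<omega>)}"
      using E EE by (intro CollectI exI[of _ E]) simp
    then have "E \<in> r_ann (skew_gps leq \<omega>) Y"
      unfolding ann .
    then have "const_series p \<otimes>\<^bsub>skew_gps leq \<omega>\<^esub> E = (\<lambda>s. 0)"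
      using const_in[OF that] unfolding r_ann_def skew_gps_zero by blast
    then show ?thesis
      unfolding const_series_mult[OF hom] by (rule fun_cong)
  qed
  have "r_ann tc_ring P = {E 1 * a | a. a \<in> UNIV}"
  proof
    show "r_ann tc_ring P \<subseteq> {E 1 * a | a. a \<in> UNIV}"
    proof
      fix b assume "b \<in> r_ann tc_ring P"
      then have "b = E 1 * b"
        using unit unfolding r_ann_tc_ring by simp
      then show "b \<in> {E 1 * a | a. a \<in> UNIV}" by blast
    qed
    show "{E 1 * a | a. a \<in> UNIV} \<subseteq> r_ann tc_ring P"
      using kill unfolding r_ann_tc_ring by (auto simp: mult.assoc[symmetric])
  qed
  moreover have "E 1 * E 1 = E 1"
    using unit kill by blast
  ultimately show ?thesis
    unfolding r_ann_idempotent_generated_def by auto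
qed

lemma const_series_r_ann_set_pow_const:
  fixes leq :: "'m::monoid_mult \<Rightarrow> 'm \<Rightarrow> bool" and \<omega> :: "'m \<Rightarrow> 'a::ring_1 \<Rightarrow> 'a"
  assumes om: "ordered_monoid leq" and hom: "monoid_hom_End \<omega>"
    and b: "\<forall>p\<in>set_pow (tc_ring :: 'a ring) X (Suc n). p * b = 0"
  shows "const_series b \<in> r_ann (skew_gps leq \<omega>) (set_pow (skew_gps leq \<omega>) (const_series ` X) (Suc n))"
proof -
  have "F \<otimes>\<^bsub>skew_gps leq \<omega>\<^esub> const_series b = \<zero>\<^bsub>skew_gps leq \<omega>\<^esub>"
    if F: "F \<in> set_pow (skew_gps leq \<omega>) (const_series ` X) (Suc n)" for F
  proof -
    obtain p where "p \<in> set_pow tc_ring X (Suc n)" and "F = const_series p"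
      using set_pow_const_series_image[OF hom F] by blast
    then have "F \<otimes>\<^bsub>skew_gps leq \<omega>\<^esub> const_series b = const_series (p * b)" and "p * b = 0"
      using const_series_mult_const_series[OF hom] b by auto
    then show ?thesis
      by (simp add: skew_gps_zero const_series_def)
  qed
  then show ?thesis
    unfolding r_ann_def using const_series_carrier[OF om] by blast
qed

lemma gen_right_Baer_coeff_ring:
  fixes leq :: "'m::monoid_mult \<Rightarrow> 'm \<Rightarrow> bool" and \<omega> :: "'m \<Rightarrow> 'a::ring_1 \<Rightarrow> 'a"
  assumes som: "strictly_ordered_monoid leq" and hom: "monoid_hom_End \<omega>"
    and arm: "S_omega_Armendariz leq \<omega>"
    and Baer: "gen_right_Baer (skew_gps leq \<omega>)"
  shows "gen_right_Baer (tc_ring :: 'a ring)"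
  unfolding gen_right_Baer_iff
proof (intro allI impI)
  fix X :: "'a set" assume X: "X \<subseteq> carrier tc_ring \<and> X \<noteq> {}"
  have om: "ordered_monoid leq"
    using som by (rule strictly_ordered_monoid_imp_ordered_monoid)
  have "const_series ` X \<subseteq> carrier (skew_gps leq \<omega>) \<and> const_series ` X \<noteq> {}"
    using X const_series_carrier[OF om] by blast
  then obtain n where "n \<ge> 1"
    and gen: "r_ann_idempotent_generated (skew_gps leq \<omega>) (set_pow (skew_gps leq \<omega>) (const_series ` X) n)"
    using Baer unfolding gen_right_Baer_iff by blast
  then obtain m where n: "n = Suc m"
    by (cases n) auto
  have "r_ann_idempotent_generated (tc_ring :: 'a ring) (set_pow tc_ring X n)"
    unfolding n
    by (rule r_ann_idempotent_generated_coeff_ring[OF som hom arm gen[unfolded n]])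
      (use const_series_set_pow[OF hom] const_series_r_ann_set_pow_const[OF om hom] in blast)+
  then show "\<exists>n\<ge>1. r_ann_idempotent_generated tc_ring (set_pow tc_ring X n)"
    using \<open>n \<ge> 1\<close> by blast
qed

lemma tc_ring_a_inv: "\<ominus>\<^bsub>tc_ring\<^esub> a = - (a :: 'a::ring_1)"
  unfolding a_inv_def m_inv_def
  by (rule the_equality) (auto simp: tc_ring_def dest: minus_unique)

lemma tc_ring_additive_subgroupD:
  assumes "additive_subgroup I (tc_ring :: 'a::ring_1 ring)"
  shows "0 \<in> I" and "a \<in> I \<Longrightarrow> b \<in> I \<Longrightarrow> a + b \<in> I" and "a \<in> I \<Longrightarrow> - a \<in> I"
proof -
  interpret additive_subgroup I "tc_ring :: 'a ring"
    by (rule assms)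
  show "0 \<in> I" using zero_closed by simp
  show "a \<in> I \<Longrightarrow> b \<in> I \<Longrightarrow> a + b \<in> I" using a_closed by simp
  show "a \<in> I \<Longrightarrow> - a \<in> I" using a_inv_closed by (simp add: tc_ring_a_inv)
qed

lemma sum_mem_add_closed:
  assumes "0 \<in> I" and "\<And>a b. a \<in> I \<Longrightarrow> b \<in> I \<Longrightarrow> a + b \<in> I"
    and "\<And>t. t \<in> T \<Longrightarrow> f t \<in> I"
  shows "sum f T \<in> I"
  using assms(3)
  by (induction T rule: infinite_finite_induct) (auto simp: assms(1,2))

lemma skew_gps_a_inv:
  assumes "ordered_monoid leq" and f: "f \<in> carrier (skew_gps leq \<omega>)"
  shows "\<ominus>\<^bsub>skew_gps leq \<omega>\<^esub> f = (\<lambda>s. - f s)"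
  unfolding a_inv_def m_inv_def
proof (rule the_equality)
  have "(\<lambda>s. - f s) \<in> carrier (skew_gps leq \<omega>)"
    by (rule skew_gps_carrier_supp_subset[OF assms(1) f f]) (auto simp: supp_def)
  then show "(\<lambda>s. - f s) \<in> carrier (add_monoid (skew_gps leq \<omega>)) \<and>
      f \<otimes>\<^bsub>add_monoid (skew_gps leq \<omega>)\<^esub> (\<lambda>s. - f s) = \<one>\<^bsub>add_monoid (skew_gps leq \<omega>)\<^esub> \<and>
      (\<lambda>s. - f s) \<otimes>\<^bsub>add_monoid (skew_gps leq \<omega>)\<^esub> f = \<one>\<^bsub>add_monoid (skew_gps leq \<omega>)\<^esub>"
    by (simp add: skew_gps_add skew_gps_zero)
next
  fix g assume "g \<in> carrier (add_monoid (skew_gps leq \<omega>)) \<and>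
      f \<otimes>\<^bsub>add_monoid (skew_gps leq \<omega>)\<^esub> g = \<one>\<^bsub>add_monoid (skew_gps leq \<omega>)\<^esub> \<and>
      g \<otimes>\<^bsub>add_monoid (skew_gps leq \<omega>)\<^esub> f = \<one>\<^bsub>add_monoid (skew_gps leq \<omega>)\<^esub>"
  then have "(\<lambda>s. f s + g s) = (\<lambda>s. 0)"
    by (simp add: skew_gps_add skew_gps_zero)
  then show "g = (\<lambda>s. - f s)"
    by (metis add_eq_0_iff)
qed

definition series_over :: "('m::monoid_mult \<Rightarrow> 'm \<Rightarrow> bool) \<Rightarrow> ('m \<Rightarrow> 'a::ring_1 \<Rightarrow> 'a) \<Rightarrow>
    'a set \<Rightarrow> ('m \<Rightarrow> 'a) set" where
  "series_over leq \<omega> I = {f \<in> carrier (skew_gps leq \<omega>). \<forall>s. f s \<in> I}"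

lemma series_over_additive_subgroup:
  assumes om: "ordered_monoid leq" and I: "additive_subgroup I (tc_ring :: 'a::ring_1 ring)"
  shows "additive_subgroup (series_over leq (\<omega> :: 'm::monoid_mult \<Rightarrow> 'a \<Rightarrow> 'a) I) (skew_gps leq \<omega>)"
proof (rule additive_subgroupI, rule subgroup.intro)
  note I_closed = tc_ring_additive_subgroupD[OF I]
  show "series_over leq \<omega> I \<subseteq> carrier (add_monoid (skew_gps leq \<omega>))"
    unfolding series_over_def by auto
next
  fix f g assume f: "f \<in> series_over leq \<omega> I" and g: "g \<in> series_over leq \<omega> I"
  then have "(\<lambda>s. f s + g s) \<in> carrier (skew_gps leq \<omega>)"
    unfolding series_over_def
    by (auto intro: skew_gps_carrier_supp_subset[OF om] simp: supp_def)
  then show "f \<otimes>\<^bsub>add_monoid (skew_gps leq \<omega>)\<^esub> g \<in> series_over leq \<omega> I"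
    using f g tc_ring_additive_subgroupD(2)[OF I] unfolding series_over_def
    by (simp add: skew_gps_add)
next
  have "(\<lambda>s. 0) \<in> carrier (skew_gps leq \<omega>)"
    by (simp add: skew_gps_carrier_iff[OF om] supp_def wpo_set_def)
  then show "\<one>\<^bsub>add_monoid (skew_gps leq \<omega>)\<^esub> \<in> series_over leq \<omega> I"
    using tc_ring_additive_subgroupD(1)[OF I] unfolding series_over_def
    by (simp add: skew_gps_zero)
next
  fix f assume f: "f \<in> series_over leq \<omega> I"
  then have "\<ominus>\<^bsub>skew_gps leq \<omega>\<^esub> f = (\<lambda>s. - f s)"
    unfolding series_over_def by (simp add: skew_gps_a_inv[OF om])
  moreover have "(\<lambda>s. - f s) \<in> carrier (skew_gps leq \<omega>)"
    using f unfolding series_over_def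
    by (auto intro: skew_gps_carrier_supp_subset[OF om] simp: supp_def)
  ultimately show "inv\<^bsub>add_monoid (skew_gps leq \<omega>)\<^esub> f \<in> series_over leq \<omega> I"
    using f tc_ring_additive_subgroupD(3)[OF I] unfolding series_over_def a_inv_def by simp
qed

lemma series_over_right_ideal:
  assumes som: "strictly_ordered_monoid leq" and I: "right_ideal I (tc_ring :: 'a::ring_1 ring)"
  shows "right_ideal (series_over leq (\<omega> :: 'm::monoid_mult \<Rightarrow> 'a \<Rightarrow> 'a) I) (skew_gps leq \<omega>)"
proof -
  have sub: "additive_subgroup I (tc_ring :: 'a ring)" and mult: "\<And>x r. x \<in> I \<Longrightarrow> x * r \<in> I"
    using I unfolding right_ideal_def by auto
  have "f \<otimes>\<^bsub>skew_gps leq \<omega>\<^esub> r \<in> series_over leq \<omega> I"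
    if f: "f \<in> series_over leq \<omega> I" and r: "r \<in> carrier (skew_gps leq \<omega>)" for f r
  proof -
    have "(f \<otimes>\<^bsub>skew_gps leq \<omega>\<^esub> r) s \<in> I" for s
      unfolding skew_gps_mult using f mult unfolding series_over_def
      by (intro sum_mem_add_closed[OF tc_ring_additive_subgroupD(1,2)[OF sub]]) auto
    then show ?thesis
      using f skew_gps_mult_closed[OF som _ r] unfolding series_over_def by blast
  qed
  then show ?thesis
    unfolding right_ideal_def
    using series_over_additive_subgroup[OF strictly_ordered_monoid_imp_ordered_monoid[OF som] sub]
    by blast
qed

lemma S_compatible_mult_eq_0_iff: "S_compatible \<omega> \<Longrightarrow> a * \<omega> s b = 0 \<longleftrightarrow> a * b = 0"
  unfolding S_compatible_def compatible_endo_def by blast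

lemma set_pow_series_over_coeff_mult_eq_0:
  fixes leq :: "'m::monoid_mult \<Rightarrow> 'm \<Rightarrow> bool" and \<omega> :: "'m \<Rightarrow> 'a::ring_1 \<Rightarrow> 'a"
  assumes hom: "monoid_hom_End \<omega>" and cp: "S_compatible \<omega>"
    and I: "\<And>x r. x \<in> I \<Longrightarrow> x * r \<in> I"
  shows "F \<in> set_pow (skew_gps leq \<omega>) (series_over leq \<omega> I) (Suc n) \<Longrightarrow>
    \<forall>p\<in>set_pow (tc_ring :: 'a ring) I (Suc n). p * c = 0 \<Longrightarrow> F s * c = 0"
proof (induction n arbitrary: F s c)
  case 0
  then show ?case unfolding series_over_def by auto
next
  case (Suc n)
  then obtain G H where G: "G \<in> set_pow (skew_gps leq \<omega>) (series_over leq \<omega> I) (Suc n)"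
    and H: "H \<in> series_over leq \<omega> I" and F: "F = G \<otimes>\<^bsub>skew_gps leq \<omega>\<^esub> H"
    by auto
  have "G u * \<omega> u (H v) * c = 0" for u v
  proof -
    have "\<forall>p\<in>set_pow (tc_ring :: 'a ring) I (Suc n). p * (H v * c) = 0"
    proof
      fix p assume "p \<in> set_pow (tc_ring :: 'a ring) I (Suc n)"
      then have "p * H v \<in> set_pow (tc_ring :: 'a ring) I (Suc (Suc n))"
        using H unfolding series_over_def by auto
      then have "p * H v * c = 0"
        by (rule Suc.prems(2)[rule_format])
      then show "p * (H v * c) = 0"
        by (simp add: mult.assoc)
    qed
    then have "G u * (H v * c) = 0"
      using Suc.IH[OF G] by blast
    \<comment> \<open>compatibility moves \<open>\<omega> u\<close> onto both factors of \<open>H v * c\<close>\<close>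
    then have "G u * (\<omega> u (H v) * \<omega> u c) = 0"
      by (simp add: S_compatible_mult_eq_0_iff[OF cp] monoid_hom_End_mult[OF hom, symmetric])
    then have "(G u * \<omega> u (H v)) * \<omega> u c = 0"
      by (simp add: mult.assoc)
    then show ?thesis
      by (simp only: S_compatible_mult_eq_0_iff[OF cp])
  qed
  then show ?case
    unfolding F skew_gps_mult by (simp add: sum_distrib_right split_beta)
qed

lemma const_series_r_ann_set_pow_series_over:
  fixes leq :: "'m::monoid_mult \<Rightarrow> 'm \<Rightarrow> bool" and \<omega> :: "'m \<Rightarrow> 'a::ring_1 \<Rightarrow> 'a"
  assumes om: "ordered_monoid leq" and hom: "monoid_hom_End \<omega>" and cp: "S_compatible \<omega>"
    and I: "\<And>x r. x \<in> I \<Longrightarrow> x * r \<in> I"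
    and b: "\<forall>p\<in>set_pow (tc_ring :: 'a ring) I (Suc n). p * b = 0"
  shows "const_series b \<in>
    r_ann (skew_gps leq \<omega>) (set_pow (skew_gps leq \<omega>) (series_over leq \<omega> I) (Suc n))"
proof -
  have "F \<otimes>\<^bsub>skew_gps leq \<omega>\<^esub> const_series b = \<zero>\<^bsub>skew_gps leq \<omega>\<^esub>"
    if F: "F \<in> set_pow (skew_gps leq \<omega>) (series_over leq \<omega> I) (Suc n)" for F
  proof -
    have "F s * b = 0" for s
      by (rule set_pow_series_over_coeff_mult_eq_0[OF hom cp I F b])
    then show ?thesis
      by (simp add: mult_const_series[OF hom] skew_gps_zero S_compatible_mult_eq_0_iff[OF cp]
          fun_eq_iff)
  qed
  then show ?thesis
    unfolding r_ann_def using const_series_carrier[OF om] by blast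
qed

lemma gen_right_qBaer_coeff_ring:
  fixes leq :: "'m::monoid_mult \<Rightarrow> 'm \<Rightarrow> bool" and \<omega> :: "'m \<Rightarrow> 'a::ring_1 \<Rightarrow> 'a"
  assumes som: "strictly_ordered_monoid leq" and hom: "monoid_hom_End \<omega>"
    and arm: "S_omega_Armendariz leq \<omega>" and cp: "S_compatible \<omega>"
    and qBaer: "gen_right_qBaer (skew_gps leq \<omega>)"
  shows "gen_right_qBaer (tc_ring :: 'a ring)"
  unfolding gen_right_qBaer_iff
proof (intro allI impI)
  fix I :: "'a set" assume I: "right_ideal I tc_ring"
  have om: "ordered_monoid leq"
    using som by (rule strictly_ordered_monoid_imp_ordered_monoid)
  have "0 \<in> I" and mult: "\<And>x r. x \<in> I \<Longrightarrow> x * r \<in> I"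
    using I tc_ring_additive_subgroupD(1) unfolding right_ideal_def by auto
  then have const: "const_series a \<in> series_over leq \<omega> I" if "a \<in> I" for a
    using that const_series_carrier[OF om] unfolding series_over_def const_series_def by auto
  obtain n where "n \<ge> 1" and gen: "r_ann_idempotent_generated (skew_gps leq \<omega>)
      (set_pow (skew_gps leq \<omega>) (series_over leq \<omega> I) n)"
    using qBaer series_over_right_ideal[OF som I] unfolding gen_right_qBaer_iff by blast
  then obtain m where n: "n = Suc m"
    by (cases n) auto
  have "r_ann_idempotent_generated (tc_ring :: 'a ring) (set_pow tc_ring I n)"
    unfolding n
    by (rule r_ann_idempotent_generated_coeff_ring[OF som hom arm gen[unfolded n]])
      (use const_series_set_pow[OF hom const]
         const_series_r_ann_set_pow_series_over[OF om hom cp mult] in blast)+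
  then show "\<exists>n\<ge>1. r_ann_idempotent_generated tc_ring (set_pow tc_ring I n)"
    using \<open>n \<ge> 1\<close> by blast
qed

theorem proposition3p5:
  fixes leq :: "'m::monoid_mult \<Rightarrow> 'm \<Rightarrow> bool"
    and \<omega> :: "'m \<Rightarrow> 'a::ring_1 \<Rightarrow> 'a"
  assumes "strictly_ordered_monoid leq"
    and "quasitotally_ordered leq"
    and "monoid_hom_End \<omega>"
    and "S_omega_Armendariz leq \<omega>"
  shows "(gen_right_Baer (skew_gps leq \<omega>) \<longrightarrow> gen_right_Baer (tc_ring :: 'a ring))
       \<and> (S_compatible \<omega> \<and> gen_right_qBaer (skew_gps leq \<omega>) \<longrightarrow> gen_right_qBaer (tc_ring :: 'a ring))"
  using gen_right_Baer_coeff_ring[OF assms(1,3,4)] gen_right_qBaer_coeff_ring[OF assms(1,3,4)]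
  by blast

end
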